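(* Let $\epsilon\in(0,1]$, $\gamma>0$, $N\ge2$. For $x\in V$ let $\vec p_x=(\hat p((x,0),(L,0)),\hat p((x,0),(L,1)),\hat p((x,0),(R,0)),\hat p((x,0),(R,1)))^T$ and $\vec q_x=(\hat p((x,1),(L,0)),\hat p((x,1),(L,1)),\hat p((x,1),(R,0)),\hat p((x,1),(R,1)))^T$. Then the matrix $M_\epsilon$ is invertible and, for all $x\in V$, $$\vec p_x=\vec c_1x+\vec c_2+\epsilon(\vec c_3\alpha_1^x+\vec c_4\alpha_2^x),\qquad \vec q_x=\vec c_1x+\vec c_2-(\vec c_3\alpha_1^x+\vec c_4\alpha_2^x).$$
   Context: $V=\{1,\dots,N\}$. Absorption probabilities: consider the continuous-time Markov chain on $(V\times\{0,1\})\cup\{(L,0),(L,1),(R,0),(R,1)\}$ in which the last four states are absorbing, and from $(x,0)$ it jumps to $(x\pm1,0)$ at rate $1$ each (whenever $x\pm1\in V$), from $(x,1)$ to $(x\pm1,1)$ at rate $\epsilon$ each (whenever $x\pm1\in V$), from $(x,i)$ to $(x,1-i)$ at rate $\gamma$, from $(1,i)$ to $(L,i)$ at rate $1$, and from $(N,i)$ to $(R,i)$ at rate $1$. $\hat p((x,i),(\beta,j))$ denotes the probability that this chain started at $(x,i)$ is eventually absorbed at $(\beta,j)$. Let $\alpha_1<\alpha_2$ be the two roots of $\epsilon\alpha^2-(\gamma(1+\epsilon)+2\epsilon)\alpha+\epsilon=0$, i.e. $\alpha_{1,2}=1+\frac\gamma2(1+\frac1\epsilon)\mp\sqrt{[1+\frac\gamma2(1+\frac1\epsilon)]^2-1}$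 (so $\alpha_1\alpha_2=1$). Let $$M_\epsilon=\begin{pmatrix}0&1&\epsilon&\epsilon\\ 1-\epsilon&1&(\epsilon-1)\alpha_1-\epsilon&(\epsilon-1)\alpha_2-\epsilon\\ N+1&1&\epsilon\alpha_1^{N+1}&\epsilon\alpha_2^{N+1}\\ N+\epsilon&1&-\alpha_1^N(\epsilon\alpha_1+1-\epsilon)&-\alpha_2^N(\epsilon\alpha_2+1-\epsilon)\end{pmatrix},$$ and for $k\in\{1,2,3,4\}$ let $\vec c_k=(M_\epsilon^{-1})^T\vec e_k\in\mathbb R^4$ (the transpose of the $k$-th row of $M_\epsilon^{-1}$), $\vec e_k$ the standard basis vectors. *)

theory Defs
  imports "HOL-Analysis.Analysis"
begin

text \<open>States of the chain: transient states (x,i) with x in V = {1..N}, i in {0,1},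
  and the four absorbing states (L,i), (R,i).\<close>
datatype state = S nat nat | Lst nat | Rst nat

definition states :: "nat \<Rightarrow> state set" where
  "states N = {S x i | x i. x \<in> {1..N} \<and> i \<in> {0,1}} \<union> {Lst 0, Lst 1, Rst 0, Rst 1}"

fun rate :: "real \<Rightarrow> real \<Rightarrow> nat \<Rightarrow> state \<Rightarrow> state \<Rightarrow> real" where
  "rate eps gam N (S x i) (S y j) =
     (if j = i \<and> (y = x + 1 \<or> y + 1 = x) \<and> y \<in> {1..N} then (if i = 0 then 1 else eps)
      else if j = 1 - i \<and> y = x then gam else 0)"
| "rate eps gam N (S x i) (Lst j) = (if j = i \<and> x = 1 then 1 else 0)"
| "rate eps gam N (S x i) (Rst j) = (if j = i \<and> x = N then 1 else 0)"
| "rate eps gam N (Lst i) t = 0"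
| "rate eps gam N (Rst i) t = 0"

definition absorbing :: "state \<Rightarrow> bool" where
  "absorbing s = (case s of S _ _ \<Rightarrow> False | _ \<Rightarrow> True)"

definition jump :: "real \<Rightarrow> real \<Rightarrow> nat \<Rightarrow> state \<Rightarrow> state \<Rightarrow> real" where
  "jump eps gam N s t =
     (if absorbing s then (if s = t then 1 else 0)
      else rate eps gam N s t / (\<Sum>u\<in>states N. rate eps gam N s u))"

fun nstep :: "real \<Rightarrow> real \<Rightarrow> nat \<Rightarrow> nat \<Rightarrow> state \<Rightarrow> state \<Rightarrow> real" where
  "nstep eps gam N 0 s t = (if s = t then 1 else 0)"
| "nstep eps gam N (Suc n) s t = (\<Sum>u\<in>states N. jump eps gam N s u * nstep eps gam N n u t)"

text \<open>Absorption probability \<open>p_hat s t\<close>: since t is absorbing, the probability of being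
  eventually absorbed at t equals the limit of the probability of being at t after n jumps
  (the CTMC and its jump chain visit the same sequence of states).\<close>
definition p_hat :: "real \<Rightarrow> real \<Rightarrow> nat \<Rightarrow> state \<Rightarrow> state \<Rightarrow> real" where
  "p_hat eps gam N s t = lim (\<lambda>n. nstep eps gam N n s t)"

definition alpha1 :: "real \<Rightarrow> real \<Rightarrow> real" where
  "alpha1 eps gam = 1 + gam/2 * (1 + 1/eps) - sqrt ((1 + gam/2 * (1 + 1/eps))^2 - 1)"

definition alpha2 :: "real \<Rightarrow> real \<Rightarrow> real" where
  "alpha2 eps gam = 1 + gam/2 * (1 + 1/eps) + sqrt ((1 + gam/2 * (1 + 1/eps))^2 - 1)"

text \<open>Selecting by index of type 4: the elements are 1,2,3 and 4 (= 0).\<close>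
definition sel4 :: "4 \<Rightarrow> 'a \<Rightarrow> 'a \<Rightarrow> 'a \<Rightarrow> 'a \<Rightarrow> 'a" where
  "sel4 k a b c d = (if k = 1 then a else if k = 2 then b else if k = 3 then c else d)"

definition Meps :: "real \<Rightarrow> real \<Rightarrow> nat \<Rightarrow> real^4^4" where
  "Meps eps gam N = (let a1 = alpha1 eps gam; a2 = alpha2 eps gam in
     \<chi> r c. sel4 r
       (sel4 c 0 1 eps eps)
       (sel4 c (1 - eps) 1 ((eps - 1) * a1 - eps) ((eps - 1) * a2 - eps))
       (sel4 c (real N + 1) 1 (eps * a1 ^ (N + 1)) (eps * a2 ^ (N + 1)))
       (sel4 c (real N + eps) 1 (- (a1 ^ N * (eps * a1 + 1 - eps))) (- (a2 ^ N * (eps * a2 + 1 - eps)))))"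

definition cvec :: "real \<Rightarrow> real \<Rightarrow> nat \<Rightarrow> 4 \<Rightarrow> real^4" where
  "cvec eps gam N k = transpose (matrix_inv (Meps eps gam N)) *v axis k 1"

definition target :: "4 \<Rightarrow> state" where
  "target m = sel4 m (Lst 0) (Lst 1) (Rst 0) (Rst 1)"

definition pvec :: "real \<Rightarrow> real \<Rightarrow> nat \<Rightarrow> nat \<Rightarrow> nat \<Rightarrow> real^4" where
  "pvec eps gam N i x = (\<chi> m. p_hat eps gam N (S x i) (target m))"

end

theory Submission
  imports Defs
begin

text \<open>For every \<open>c \<in> \<real>\<^sup>4\<close> the function
  \<open>g(x,0) = c\<^sub>1 x + c\<^sub>2 + \<epsilon> (c\<^sub>3 \<alpha>\<^sub>1\<^sup>x + c\<^sub>4 \<alpha>\<^sub>2\<^sup>x)\<close>, \<open>g(x,1) = c\<^sub>1 x + c\<^sub>2 - (c\<^sub>3 \<alpha>\<^sub>1\<^sup>x + c\<^sub>4 \<alpha>\<^sub>2\<^sup>x)\<close>,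
  suitably extended to the four absorbing states, is harmonic for the chain: the linear part
  solves both decoupled difference equations, and the exponential part solves the coupled system
  because \<open>\<alpha>\<^sub>1, \<alpha>\<^sub>2\<close> are the roots of the characteristic equation. The four boundary values of
  \<open>g\<close> are the entries of \<open>M\<^sub>\<epsilon> c\<close>. The quadratic Lyapunov function \<open>x (N + 1 - x)\<close> shows that the
  chain is absorbed almost surely, so a harmonic function is the expectation of its boundary
  values. Hence \<open>M\<^sub>\<epsilon> c = 0\<close> forces \<open>g = 0\<close>, which at \<open>x = 1, 2\<close> gives \<open>c = 0\<close>; and for
  \<open>c = M\<^sub>\<epsilon>\<^sup>-\<^sup>1 e\<^sub>k\<close> the function \<open>g\<close> is the probability of absorption in the \<open>k\<close>-th absorbing state.\<close>

definition transient :: "nat \<Rightarrow> state set" where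
  "transient N = {S x i | x i. x \<in> {1..N} \<and> i \<in> {0,1}}"

definition boundary :: "state set" where
  "boundary = {Lst 0, Lst 1, Rst 0, Rst 1}"

lemma states_eq_transient_Un_boundary: "states N = transient N \<union> boundary"
  by (simp add: states_def transient_def boundary_def)

lemma transient_eq_image: "transient N = (\<lambda>(x,i). S x i) ` ({1..N} \<times> {0,1})"
  by (auto simp: transient_def)

lemma finite_transient [simp]: "finite (transient N)"
  by (simp add: transient_eq_image)

lemma finite_boundary [simp]: "finite boundary"
  by (simp add: boundary_def)

lemma finite_states [simp]: "finite (states N)"
  by (simp add: states_eq_transient_Un_boundary)

lemma S_in_transient_iff: "S x i \<in> transient N \<longleftrightarrow> 1 \<le> x \<and> x \<le> N \<and> i \<le> 1"
  by (auto simp: transient_def)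

lemma transientE:
  assumes "s \<in> transient N"
  obtains x i where "s = S x i" "1 \<le> x" "x \<le> N" "i \<le> 1"
  using assms by (auto simp: transient_def)

lemma boundary_in_states: "s \<in> boundary \<Longrightarrow> s \<in> states N"
  by (simp add: states_eq_transient_Un_boundary)

lemma sum_states:
  "(\<Sum>u\<in>states N. f u) = (\<Sum>u\<in>transient N. f u) + (\<Sum>u\<in>boundary. f u)"
  unfolding states_eq_transient_Un_boundary
  by (intro sum.union_disjoint finite_transient finite_boundary) (auto simp: transient_def boundary_def)

lemma sum_transient: "(\<Sum>u\<in>transient N. f u) = (\<Sum>y=1..N. f (S y 0) + f (S y 1))"
proof -
  have "inj_on (\<lambda>(x,i). S x i) ({1..N} \<times> {0::nat,1})"
    by (auto simp: inj_on_def)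
  then have "(\<Sum>u\<in>transient N. f u) = (\<Sum>(y,j)\<in>{1..N} \<times> {0::nat,1}. f (S y j))"
    unfolding transient_eq_image by (simp add: sum.reindex case_prod_unfold)
  also have "\<dots> = (\<Sum>y=1..N. \<Sum>j\<in>{0::nat,1}. f (S y j))"
    by (rule sum.cartesian_product[symmetric])
  finally show ?thesis by simp
qed

lemma target_simps [simp]:
  "target 1 = Lst 0" "target 2 = Lst 1" "target 3 = Rst 0" "target 4 = Rst 1"
  by (simp_all add: target_def sel4_def)

lemma boundary_eq_range_target: "boundary = range target"
  by (simp add: UNIV_4 boundary_def)

lemma inj_target: "inj target"
proof -
  have "\<forall>r r'::4. target r = target r' \<longrightarrow> r = r'"
    unfolding forall_4 by simp
  then show ?thesis by (auto simp: inj_def)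
qed

lemma sum_rate_boundary:
  assumes "i \<le> 1"
  shows "(\<Sum>u\<in>boundary. rate eps gam N (S x i) u * F u) =
     (if x = 1 then F (Lst i) else 0) + (if x = N then F (Rst i) else 0)"
  using assms by (cases i) (auto simp: boundary_def)

lemma sum_rate_transient:
  assumes x: "1 \<le> x" "x \<le> N" and i: "i \<le> 1"
  shows "(\<Sum>u\<in>transient N. rate eps gam N (S x i) u * F u) =
     (if 1 < x then (if i = 0 then 1 else eps) * F (S (x-1) i) else 0)
   + (if x < N then (if i = 0 then 1 else eps) * F (S (x+1) i) else 0)
   + gam * F (S x (1-i))"
proof -
  let ?r = "if i = 0 then 1 else eps"
  let ?term = "\<lambda>y. (if y = x - 1 then (if 1 < x then ?r * F (S (x-1) i) else 0) else 0)
     + (if y = x + 1 then ?r * F (S (x+1) i) else 0) + (if y = x then gam * F (S x (1-i)) else 0)"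
  have "rate eps gam N (S x i) (S y 0) * F (S y 0) + rate eps gam N (S x i) (S y 1) * F (S y 1)
      = ?term y" if "y \<in> {1..N}" for y
    using x i that by (cases i) auto
  then have "(\<Sum>u\<in>transient N. rate eps gam N (S x i) u * F u) = (\<Sum>y=1..N. ?term y)"
    unfolding sum_transient by (intro sum.cong) auto
  also have "\<dots> = (if 1 < x then ?r * F (S (x-1) i) else 0)
      + (if x < N then ?r * F (S (x+1) i) else 0) + gam * F (S x (1-i))"
    using x by (simp only: sum.distrib sum.delta finite_atLeastAtMost) auto
  finally show ?thesis .
qed

lemma sum_rate_S:
  assumes "1 \<le> x" "x \<le> N" "i \<le> 1"
  shows "(\<Sum>u\<in>states N. rate eps gam N (S x i) u * F u) =
     (if 1 < x then (if i = 0 then 1 else eps) * F (S (x-1) i) else F (Lst i))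
   + (if x < N then (if i = 0 then 1 else eps) * F (S (x+1) i) else F (Rst i))
   + gam * F (S x (1-i))"
  unfolding sum_states sum_rate_transient[OF assms] sum_rate_boundary[OF assms(3)]
  using assms by auto

lemma invertible_mult_matrix_inv:
  fixes A :: "'a::semiring_1^'n^'m"
  assumes "invertible A"
  shows "A ** matrix_inv A = mat 1"
  using assms unfolding invertible_def matrix_inv_def by (rule someI2_ex) auto

context
  fixes eps gam :: real and N :: nat
  assumes eps: "0 < eps" "eps \<le> 1" and gam: "0 < gam" and N2: "2 \<le> N"
begin

subsection \<open>Harmonic functions and the jump chain\<close>

lemma rate_nonneg: "0 \<le> rate eps gam N s u"
  using eps gam by (cases s; cases u) auto

definition total_rate :: "state \<Rightarrow> real" where
  "total_rate s = (\<Sum>u\<in>states N. rate eps gam N s u)"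

lemma total_rate_bounds:
  assumes "s \<in> transient N"
  shows "gam \<le> total_rate s" "total_rate s \<le> 2 + gam"
proof -
  obtain x i where s: "s = S x i" "1 \<le> x" "x \<le> N" "i \<le> 1"
    using assms by (rule transientE)
  have "total_rate s = (if 1 < x then (if i = 0 then 1 else eps) else 1)
      + (if x < N then (if i = 0 then 1 else eps) else 1) + gam"
    unfolding total_rate_def using sum_rate_S[OF s(2-4), of eps gam "\<lambda>_. 1"] s(1) by simp
  then show "gam \<le> total_rate s" "total_rate s \<le> 2 + gam"
    using eps by auto
qed

definition generator :: "(state \<Rightarrow> real) \<Rightarrow> state \<Rightarrow> real" where
  "generator g s = (\<Sum>u\<in>states N. rate eps gam N s u * (g u - g s))"

lemma jump_nonneg: "0 \<le> jump eps gam N s u"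
  by (auto simp: jump_def intro!: divide_nonneg_nonneg sum_nonneg rate_nonneg)

lemma nstep_nonneg: "0 \<le> nstep eps gam N n s u"
  by (induction n arbitrary: s) (auto intro!: sum_nonneg mult_nonneg_nonneg jump_nonneg)

lemma sum_nstep_Suc:
  "(\<Sum>u\<in>A. nstep eps gam N (Suc n) s u * f u)
     = (\<Sum>v\<in>states N. jump eps gam N s v * (\<Sum>u\<in>A. nstep eps gam N n v u * f u))"
  by (simp add: sum_distrib_left sum_distrib_right mult.assoc) (rule sum.swap)

lemma sum_nstep_0:
  assumes "finite A" "s \<in> A"
  shows "(\<Sum>u\<in>A. nstep eps gam N 0 s u * f u) = f s"
proof -
  have "(\<Sum>u\<in>A. nstep eps gam N 0 s u * f u) = (\<Sum>u\<in>A. if s = u then f s else 0)"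
    by (intro sum.cong) auto
  then show ?thesis using assms by simp
qed

lemma sum_jump_transient:
  assumes "s \<in> transient N"
  shows "(\<Sum>u\<in>states N. jump eps gam N s u * g u)
    = g s + generator g s / total_rate s"
proof -
  have pos: "0 < total_rate s"
    using total_rate_bounds(1)[OF assms] gam by linarith
  have "jump eps gam N s u = rate eps gam N s u / total_rate s" for u
    using assms by (auto simp: jump_def total_rate_def absorbing_def transient_def)
  then have "(\<Sum>u\<in>states N. jump eps gam N s u * g u)
      = (\<Sum>u\<in>states N. rate eps gam N s u * g u) / total_rate s"
    by (simp add: sum_divide_distrib)
  also have "(\<Sum>u\<in>states N. rate eps gam N s u * g u)
      = g s * total_rate s + (\<Sum>u\<in>states N. rate eps gam N s u * (g u - g s))"
    unfolding total_rate_def sum_distrib_left sum.distrib[symmetric]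
    by (rule sum.cong) (auto simp: algebra_simps)
  finally show ?thesis
    using pos by (simp add: add_divide_distrib generator_def)
qed

lemma sum_jump_boundary:
  assumes "s \<in> boundary"
  shows "(\<Sum>u\<in>states N. jump eps gam N s u * g u) = g s"
proof -
  have "jump eps gam N s u = nstep eps gam N 0 s u" for u
    using assms by (auto simp: jump_def absorbing_def boundary_def)
  then show ?thesis
    using sum_nstep_0[OF finite_states boundary_in_states[OF assms]] by simp
qed

definition harmonic :: "(state \<Rightarrow> real) \<Rightarrow> bool" where
  "harmonic g \<longleftrightarrow> (\<forall>s\<in>transient N. generator g s = 0)"

lemma harmonic_sum_nstep:
  assumes "harmonic g" "s \<in> states N"
  shows "(\<Sum>u\<in>states N. nstep eps gam N n s u * g u) = g s"
  using assms(2)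
proof (induction n arbitrary: s)
  case 0
  then show ?case by (intro sum_nstep_0) auto
next
  case (Suc n)
  have "(\<Sum>u\<in>states N. nstep eps gam N (Suc n) s u * g u)
      = (\<Sum>v\<in>states N. jump eps gam N s v * g v)"
    unfolding sum_nstep_Suc using Suc.IH by (intro sum.cong) auto
  also have "\<dots> = g s"
  proof (cases "s \<in> transient N")
    case True
    then show ?thesis
      using assms(1) by (simp add: harmonic_def sum_jump_transient)
  next
    case False
    then show ?thesis
      using Suc.prems by (intro sum_jump_boundary) (simp add: states_eq_transient_Un_boundary)
  qed
  finally show ?case .
qed

subsection \<open>Almost sure absorption\<close>

definition lyap :: "state \<Rightarrow> real" where
  "lyap s = (case s of S y j \<Rightarrow> real y * (real N + 1 - real y) | _ \<Rightarrow> 0)"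

lemma lyap_nonneg: "s \<in> states N \<Longrightarrow> 0 \<le> lyap s"
  by (auto simp: lyap_def states_eq_transient_Un_boundary transient_def boundary_def)

text \<open>The second difference of \<open>lyap\<close> is \<open>-2\<close>, it does not see the switch, and the exits at
  \<open>x = 1\<close>, \<open>x = N\<close> have rate \<open>1 \<ge> \<epsilon>\<close>.\<close>
lemma lyap_drift:
  assumes "s \<in> transient N"
  shows "generator lyap s \<le> - eps"
proof -
  obtain x i where s: "s = S x i" "1 \<le> x" "x \<le> N" "i \<le> 1"
    using assms by (rule transientE)
  have drift: "generator lyap s =
      (if 1 < x then (if i = 0 then 1 else eps) * (lyap (S (x-1) i) - lyap s) else - lyap s)
    + (if x < N then (if i = 0 then 1 else eps) * (lyap (S (x+1) i) - lyap s) else - lyap s)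
    + gam * (lyap (S x (1-i)) - lyap s)"
    using sum_rate_S[OF s(2-4), of eps gam "\<lambda>u. lyap u - lyap s"] s(1)
    by (simp add: generator_def lyap_def)
  have x1: "real (x - 1) = real x - 1"
    using s by (simp add: of_nat_diff)
  have "eps * (real N - 1) \<le> real N - 1"
    using eps N2 by (simp add: mult_left_le_one_le)
  then show ?thesis
    unfolding drift using s eps N2
    by (cases "x = 1"; cases "x = N"; cases "i = 0") (auto simp: lyap_def x1 algebra_simps)
qed

definition transient_mass :: "nat \<Rightarrow> state \<Rightarrow> real" where
  "transient_mass n s = (\<Sum>u\<in>transient N. nstep eps gam N n s u)"

lemma transient_mass_0: "transient_mass 0 s = (if s \<in> transient N then 1 else 0)"
proof -
  have "transient_mass 0 s = (\<Sum>u\<in>transient N. if s = u then 1 else 0)"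
    unfolding transient_mass_def by (intro sum.cong) auto
  then show ?thesis by simp
qed

lemma transient_mass_Suc:
  "transient_mass (Suc n) s = (\<Sum>v\<in>states N. jump eps gam N s v * transient_mass n v)"
  using sum_nstep_Suc[where A = "transient N" and f = "\<lambda>_. 1"] by (simp add: transient_mass_def)

lemma transient_mass_nonneg: "0 \<le> transient_mass n s"
  unfolding transient_mass_def by (intro sum_nonneg nstep_nonneg)

lemma sum_jump_lyap_le:
  assumes "s \<in> states N"
  shows "(\<Sum>u\<in>states N. jump eps gam N s u * lyap u) + eps / (2 + gam) * transient_mass 0 s
    \<le> lyap s"
proof (cases "s \<in> transient N")
  case True
  have "generator lyap s / total_rate s \<le> - eps / total_rate s"
    using lyap_drift[OF True] total_rate_bounds(1)[OF True] gam by (intro divide_right_mono) auto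
  also have "\<dots> \<le> - eps / (2 + gam)"
    using total_rate_bounds[OF True] eps gam by (simp add: frac_le)
  finally show ?thesis
    using True by (simp add: sum_jump_transient transient_mass_0)
next
  case False
  then have "s \<in> boundary"
    using assms by (simp add: states_eq_transient_Un_boundary)
  then show ?thesis
    using False by (simp add: sum_jump_boundary transient_mass_0)
qed

lemma lyap_bounds_transient_mass:
  assumes "s \<in> states N"
  shows "(\<Sum>u\<in>states N. nstep eps gam N n s u * lyap u)
    + eps / (2 + gam) * (\<Sum>k<n. transient_mass k s) \<le> lyap s"
  using assms
proof (induction n arbitrary: s)
  case 0
  have "(\<Sum>u\<in>states N. nstep eps gam N 0 s u * lyap u) = lyap s"
    using 0 by (intro sum_nstep_0) auto
  then show ?case by simp
next
  case (Suc n)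
  let ?c = "eps / (2 + gam)"
  let ?W = "\<lambda>v. (\<Sum>u\<in>states N. nstep eps gam N n v u * lyap u)"
  have "(\<Sum>k<n. transient_mass (Suc k) s)
      = (\<Sum>v\<in>states N. jump eps gam N s v * (\<Sum>k<n. transient_mass k v))"
    unfolding transient_mass_Suc sum_distrib_left by (rule sum.swap)
  then have "(\<Sum>u\<in>states N. nstep eps gam N (Suc n) s u * lyap u) + ?c * (\<Sum>k<Suc n. transient_mass k s)
      = ?c * transient_mass 0 s
        + (\<Sum>v\<in>states N. jump eps gam N s v * (?W v + ?c * (\<Sum>k<n. transient_mass k v)))"
    unfolding sum_nstep_Suc sum.lessThan_Suc_shift
    by (simp add: algebra_simps sum.distrib sum_distrib_left)
  also have "\<dots> \<le> ?c * transient_mass 0 s + (\<Sum>v\<in>states N. jump eps gam N s v * lyap v)"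
    using Suc.IH by (intro add_left_mono sum_mono mult_left_mono jump_nonneg) auto
  also have "\<dots> \<le> lyap s"
    using sum_jump_lyap_le[OF Suc.prems] by simp
  finally show ?case .
qed

lemma transient_mass_tendsto_0:
  assumes "s \<in> states N"
  shows "(\<lambda>n. transient_mass n s) \<longlonglongrightarrow> 0"
proof -
  have "(\<Sum>k<n. transient_mass k s) \<le> lyap s / (eps / (2 + gam))" for n
  proof -
    have "0 \<le> (\<Sum>u\<in>states N. nstep eps gam N n s u * lyap u)"
      by (intro sum_nonneg mult_nonneg_nonneg nstep_nonneg lyap_nonneg)
    with lyap_bounds_transient_mass[OF assms, of n]
    have "eps / (2 + gam) * (\<Sum>k<n. transient_mass k s) \<le> lyap s" by linarith
    then show ?thesis
      using eps gam by (simp add: field_simps)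
  qed
  then have "summable (\<lambda>n. transient_mass n s)"
    by (intro summableI_nonneg_bounded transient_mass_nonneg)
  then show ?thesis by (rule summable_LIMSEQ_zero)
qed

lemma harmonic_boundary_limit:
  assumes "harmonic g" "s \<in> states N"
  shows "(\<lambda>n. \<Sum>u\<in>boundary. nstep eps gam N n s u * g u) \<longlonglongrightarrow> g s"
proof -
  define B where "B = (\<Sum>v\<in>transient N. \<bar>g v\<bar>)"
  have bound: "\<bar>\<Sum>u\<in>transient N. nstep eps gam N n s u * g u\<bar> \<le> B * transient_mass n s" for n
  proof -
    have "\<bar>\<Sum>u\<in>transient N. nstep eps gam N n s u * g u\<bar>
        \<le> (\<Sum>u\<in>transient N. nstep eps gam N n s u * \<bar>g u\<bar>)"
      by (rule order_trans[OF sum_abs]) (simp add: abs_mult nstep_nonneg)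
    also have "\<dots> \<le> (\<Sum>u\<in>transient N. nstep eps gam N n s u * B)"
      unfolding B_def
      by (intro sum_mono mult_left_mono nstep_nonneg member_le_sum) auto
    finally show ?thesis
      by (simp add: transient_mass_def sum_distrib_left mult.commute)
  qed
  have "(\<lambda>n. B * transient_mass n s) \<longlonglongrightarrow> 0"
    using transient_mass_tendsto_0[OF assms(2)] by (rule tendsto_mult_right_zero)
  then have "(\<lambda>n. \<Sum>u\<in>transient N. nstep eps gam N n s u * g u) \<longlonglongrightarrow> 0"
    by (rule Lim_null_comparison[OF always_eventually, rotated]) (simp add: bound)
  then have "(\<lambda>n. g s - (\<Sum>u\<in>transient N. nstep eps gam N n s u * g u)) \<longlonglongrightarrow> g s - 0"
    by (intro tendsto_intros)
  moreover have "g s - (\<Sum>u\<in>transient N. nstep eps gam N n s u * g u)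
      = (\<Sum>u\<in>boundary. nstep eps gam N n s u * g u)" for n
    using harmonic_sum_nstep[OF assms, of n] by (simp add: sum_states)
  ultimately show ?thesis by simp
qed

lemma harmonic_eq_0_if_boundary_0:
  assumes "harmonic g" "\<forall>u\<in>boundary. g u = 0" "s \<in> transient N"
  shows "g s = 0"
proof -
  have "(\<lambda>n. \<Sum>u\<in>boundary. nstep eps gam N n s u * g u) \<longlonglongrightarrow> g s"
    using assms by (intro harmonic_boundary_limit) (auto simp: states_eq_transient_Un_boundary)
  then have "(\<lambda>n. 0) \<longlonglongrightarrow> g s"
    using assms(2) by simp
  then show ?thesis
    by (simp add: LIMSEQ_const_iff)
qed

lemma p_hat_eq_harmonic:
  assumes "harmonic g" "t \<in> boundary" "\<forall>u\<in>boundary. g u = (if u = t then 1 else 0)"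
    and "s \<in> states N"
  shows "p_hat eps gam N s t = g s"
proof -
  have "(\<Sum>u\<in>boundary. nstep eps gam N n s u * g u)
      = (\<Sum>u\<in>boundary. if u = t then nstep eps gam N n s t else 0)" for n
    using assms(3) by (intro sum.cong) auto
  then have "(\<lambda>n. nstep eps gam N n s t) \<longlonglongrightarrow> g s"
    using harmonic_boundary_limit[OF assms(1,4)] assms(2) by simp
  then show ?thesis
    unfolding p_hat_def by (rule limI)
qed

subsection \<open>Explicit harmonic functions\<close>

abbreviation "a1 \<equiv> alpha1 eps gam"
abbreviation "a2 \<equiv> alpha2 eps gam"

definition charpoly :: "real \<Rightarrow> real" where
  "charpoly a = eps * a^2 - (gam * (1 + eps) + 2 * eps) * a + eps"

lemma alpha_roots: "charpoly a1 = 0" "charpoly a2 = 0" "0 < a1" "a1 < a2"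
proof -
  define k where "k = 1 + gam/2 * (1 + 1/eps)"
  have k1: "1 < k"
    using eps gam by (simp add: k_def add_pos_pos)
  define r where "r = sqrt (k^2 - 1)"
  have "0 < k^2 - 1"
    using k1 by (simp add: power2_eq_square) (metis less_1_mult)
  then have r: "0 < r" "r^2 = k^2 - 1"
    by (auto simp: r_def)
  have A1: "a1 = k - r" and A2: "a2 = k + r"
    by (simp_all add: alpha1_def alpha2_def k_def r_def)
  have "a1 * a2 = 1"
    unfolding A1 A2 using r by (simp add: algebra_simps power2_eq_square)
  moreover have "0 < a2"
    unfolding A2 using r k1 by simp
  ultimately show "0 < a1"
    by (metis zero_less_mult_pos2 zero_less_one)
  show "a1 < a2"
    unfolding A1 A2 using r by simp
  have kk: "gam * (1 + eps) + 2 * eps = 2 * k * eps"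
    using eps by (simp add: k_def field_simps)
  have q1: "a1^2 - 2 * k * a1 + 1 = 0" and q2: "a2^2 - 2 * k * a2 + 1 = 0"
    unfolding A1 A2 using r by (simp_all add: algebra_simps power2_eq_square)
  show "charpoly a1 = 0"
    unfolding charpoly_def kk using arg_cong[OF q1, of "\<lambda>t. eps * t"] by (simp add: algebra_simps)
  show "charpoly a2 = 0"
    unfolding charpoly_def kk using arg_cong[OF q2, of "\<lambda>t. eps * t"] by (simp add: algebra_simps)
qed

definition prof0 :: "real^4 \<Rightarrow> nat \<Rightarrow> real" where
  "prof0 c z = c$1 * real z + c$2 + eps * (c$3 * a1^z + c$4 * a2^z)"

definition prof1 :: "real^4 \<Rightarrow> nat \<Rightarrow> real" where
  "prof1 c z = c$1 * real z + c$2 - (c$3 * a1^z + c$4 * a2^z)"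

text \<open>The walk in layer 1 moves at rate \<open>\<epsilon>\<close> but is absorbed at rate \<open>1\<close>, so the generator
  equation at \<open>(1,1)\<close> needs the boundary value \<open>q(1) + \<epsilon> (q(0) - q(1))\<close> instead of \<open>q(0)\<close>,
  and symmetrically at \<open>(N,1)\<close>.\<close>
definition candidate :: "real^4 \<Rightarrow> state \<Rightarrow> real" where
  "candidate c s = (case s of
       S y j \<Rightarrow> (if j = 0 then prof0 c y else prof1 c y)
     | Lst j \<Rightarrow> (if j = 0 then prof0 c 0 else (1 - eps) * prof1 c 1 + eps * prof1 c 0)
     | Rst j \<Rightarrow> (if j = 0 then prof0 c (N+1) else (1 - eps) * prof1 c N + eps * prof1 c (N+1)))"

lemma prof0_recurrence:
  "prof0 c z + prof0 c (Suc (Suc z)) - 2 * prof0 c (Suc z) + gam * (prof1 c (Suc z) - prof0 c (Suc z)) = 0"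
proof -
  have "prof0 c z + prof0 c (Suc (Suc z)) - 2 * prof0 c (Suc z) + gam * (prof1 c (Suc z) - prof0 c (Suc z))
    = c$3 * a1^z * charpoly a1 + c$4 * a2^z * charpoly a2"
    by (simp add: prof0_def prof1_def charpoly_def algebra_simps power2_eq_square)
  then show ?thesis
    using alpha_roots by simp
qed

lemma prof1_recurrence:
  "eps * (prof1 c z + prof1 c (Suc (Suc z)) - 2 * prof1 c (Suc z)) + gam * (prof0 c (Suc z) - prof1 c (Suc z)) = 0"
proof -
  have "eps * (prof1 c z + prof1 c (Suc (Suc z)) - 2 * prof1 c (Suc z)) + gam * (prof0 c (Suc z) - prof1 c (Suc z))
    = - c$3 * a1^z * charpoly a1 - c$4 * a2^z * charpoly a2"
    by (simp add: prof0_def prof1_def charpoly_def algebra_simps power2_eq_square)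
  then show ?thesis
    using alpha_roots by simp
qed

lemma harmonic_candidate: "harmonic (candidate c)"
  unfolding harmonic_def
proof
  fix s assume "s \<in> transient N"
  then obtain x i where s: "s = S x i" "1 \<le> x" "x \<le> N" "i \<le> 1"
    by (rule transientE)
  obtain z where z: "x = Suc z"
    using s by (cases x) auto
  note expand = sum_rate_S[OF s(2-4), of eps gam "\<lambda>u. candidate c u - candidate c s"]
  show "generator (candidate c) s = 0"
  proof (cases "i = 0")
    case True
    have "generator (candidate c) s = prof0 c z + prof0 c (Suc (Suc z)) - 2 * prof0 c (Suc z)
        + gam * (prof1 c (Suc z) - prof0 c (Suc z))"
      unfolding generator_def using expand s True z
      by (cases "z = 0"; cases "Suc z = N") (auto simp: candidate_def)
    then show ?thesis
      using prof0_recurrence by simp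
  next
    case False
    then have "i = 1"
      using s by simp
    then have "generator (candidate c) s = eps * (prof1 c z + prof1 c (Suc (Suc z)) - 2 * prof1 c (Suc z))
        + gam * (prof0 c (Suc z) - prof1 c (Suc z))"
      unfolding generator_def using expand s z
      by (cases "z = 0"; cases "Suc z = N") (auto simp: candidate_def algebra_simps)
    then show ?thesis
      using prof1_recurrence by simp
  qed
qed

lemma candidate_target: "candidate c (target r) = (Meps eps gam N *v c) $ r"
proof -
  have "\<forall>r::4. candidate c (target r) = (Meps eps gam N *v c) $ r"
    unfolding forall_4
    by (simp add: candidate_def prof0_def prof1_def Meps_def matrix_vector_mult_def
        sum_4 sel4_def Let_def algebra_simps)
  then show ?thesis by blast
qed

subsection \<open>Invertibility of \<open>M\<^sub>\<epsilon>\<close> and the absorption probabilities\<close>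

lemma eq_0_if_profiles_vanish:
  assumes "prof0 c 1 = 0" "prof0 c 2 = 0" "prof1 c 1 = 0" "prof1 c 2 = 0"
  shows "c = 0"
proof -
  have lin: "prof0 c z + eps * prof1 c z = (1 + eps) * (c$1 * real z + c$2)" for z
    by (simp add: prof0_def prof1_def algebra_simps)
  have exp: "prof0 c z - prof1 c z = (1 + eps) * (c$3 * a1^z + c$4 * a2^z)" for z
    by (simp add: prof0_def prof1_def algebra_simps)
  have "1 + eps \<noteq> 0"
    using eps by simp
  then have "c$1 + c$2 = 0" "2 * c$1 + c$2 = 0"
    "c$3 * a1 + c$4 * a2 = 0" "c$3 * a1^2 + c$4 * a2^2 = 0"
    using lin[of 1] lin[of 2] exp[of 1] exp[of 2] assms by simp_all
  moreover have "c$3 * a1^2 + c$4 * a2^2 - a2 * (c$3 * a1 + c$4 * a2) = c$3 * a1 * (a1 - a2)"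
    by (simp add: algebra_simps power2_eq_square)
  ultimately show ?thesis
    using alpha_roots(3,4) unfolding vec_eq_iff forall_4 by auto
qed

lemma Meps_invertible: "invertible (Meps eps gam N)"
proof -
  have "c = 0" if "Meps eps gam N *v c = 0" for c
  proof -
    have "\<forall>u\<in>boundary. candidate c u = 0"
      using that by (auto simp: boundary_eq_range_target candidate_target)
    then have vanish: "candidate c (S x i) = 0" if "1 \<le> x" "x \<le> 2" "i \<le> 1" for x i
      using harmonic_eq_0_if_boundary_0[OF harmonic_candidate] that N2
      by (simp add: S_in_transient_iff)
    show "c = 0"
      using vanish[of 1 0] vanish[of 2 0] vanish[of 1 1] vanish[of 2 1]
      by (intro eq_0_if_profiles_vanish) (simp_all add: candidate_def)
  qed
  then have "inj ((*v) (Meps eps gam N))"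
    by (intro injI) (metis eq_iff_diff_eq_0 matrix_vector_mult_diff_distrib)
  then show ?thesis
    using invertible_left_inverse matrix_left_invertible_injective by blast
qed

text \<open>The coefficients \<open>M\<^sub>\<epsilon>\<^sup>-\<^sup>1 e\<^sub>k\<close> of the absorption probability into \<open>target k\<close> are the
  \<open>k\<close>-th coordinates of \<open>c\<^sub>1, \<dots>, c\<^sub>4\<close>.\<close>
lemma p_hat_eq_candidate:
  assumes "x \<in> {1..N}" "i \<le> 1"
  shows "p_hat eps gam N (S x i) (target k)
    = candidate (\<chi> j. cvec eps gam N j $ k) (S x i)"
proof -
  let ?M = "Meps eps gam N"
  define c where "c = matrix_inv ?M *v axis k 1"
  have c_eq: "c = (\<chi> j. cvec eps gam N j $ k)"
    by (simp add: c_def cvec_def vec_eq_iff matrix_vector_mult_def axis_def transpose_def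
        if_distrib[of "\<lambda>t. _ * t"] cong: if_cong)
  have "?M *v c = axis k 1"
    unfolding c_def matrix_vector_mul_assoc invertible_mult_matrix_inv[OF Meps_invertible] by simp
  then have "\<forall>u\<in>boundary. candidate c u = (if u = target k then 1 else 0)"
    using inj_target[THEN injD] by (auto simp: boundary_eq_range_target candidate_target axis_def)
  then show ?thesis
    using assms unfolding c_eq[symmetric]
    by (intro p_hat_eq_harmonic harmonic_candidate)
      (auto simp: boundary_eq_range_target states_eq_transient_Un_boundary S_in_transient_iff)
qed

lemma pvec_formula:
  assumes "x \<in> {1..N}"
  shows "pvec eps gam N 0 x = real x *\<^sub>R cvec eps gam N 1 + cvec eps gam N 2
        + eps *\<^sub>R ((a1 ^ x) *\<^sub>R cvec eps gam N 3 + (a2 ^ x) *\<^sub>R cvec eps gam N 4)"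
    and "pvec eps gam N 1 x = real x *\<^sub>R cvec eps gam N 1 + cvec eps gam N 2
        - ((a1 ^ x) *\<^sub>R cvec eps gam N 3 + (a2 ^ x) *\<^sub>R cvec eps gam N 4)"
  using p_hat_eq_candidate[OF assms, of 0] p_hat_eq_candidate[OF assms, of 1]
  by (auto simp: vec_eq_iff pvec_def candidate_def prof0_def prof1_def algebra_simps)

end

theorem mainTheorem6:
  fixes eps gam :: real and N :: nat
  assumes "0 < eps" "eps \<le> 1" "0 < gam" "2 \<le> N"
  shows "invertible (Meps eps gam N) \<and>
    (\<forall>x\<in>{1..N}.
      pvec eps gam N 0 x = real x *\<^sub>R cvec eps gam N 1 + cvec eps gam N 2
        + eps *\<^sub>R ((alpha1 eps gam ^ x) *\<^sub>R cvec eps gam N 3 + (alpha2 eps gam ^ x) *\<^sub>R cvec eps gam N 4)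
    \<and> pvec eps gam N 1 x = real x *\<^sub>R cvec eps gam N 1 + cvec eps gam N 2
        - ((alpha1 eps gam ^ x) *\<^sub>R cvec eps gam N 3 + (alpha2 eps gam ^ x) *\<^sub>R cvec eps gam N 4))"
  using Meps_invertible[OF assms] pvec_formula[OF assms] by blast

end
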